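(* Let $(X,d)$ be a complete metric space and $(\mathbb{H}(X),h)$ the space of nonempty compact subsets of $X$ with the Hausdorff metric. For each $i\in\mathbb{N}$ let $\mathcal{F}_i=\{X; f_{1,i},\dots,f_{n_i,i}\}$ be a family of Lipschitz maps $f_{r,i}:X\to X$ with set map $\mathcal{F}_i(A)=\bigcup_{r=1}^{n_i} f_{r,i}(A)$ and $L_{\mathcal{F}_i}=\max_r\mathrm{Lip}(f_{r,i})$, where $\lim_{k\to\infty}\prod_{i=1}^kL_{\mathcal{F}_i}=0$. Assume there exists a compact set $C\subseteq X$ with $f_{r,i}(C)\subseteq C$ for all $r=1,\dots,n_i$, $i\in\mathbb{N}$, and assume $\sum_{k=1}^\infty\prod_{i=1}^k L_{\mathcal{F}_i}<\infty$. Then there is a unique set $P\subseteq C$ such that for every nonempty compact $A\subseteq C$, the backward trajectory $\Psi_k(A)=\mathcal{F}_1\circ\mathcal{F}_2\circ\cdots\circ\mathcal{F}_k(A)$ converges to $P$ in $(\mathbb{H}(X),h)$.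
   Context: The Hausdorff metric is $h(B,C)=\max\{d(B,C),d(C,B)\}$ with $d(B,C)=\sup_{b\in B}\inf_{c\in C}d(b,c)$. *)

theory Defs
  imports "HOL-Analysis.Analysis"
begin

text \<open>Used only for nonempty compact sets, where the sup/inf are attained.\<close>
definition hexcess :: "'a::metric_space set \<Rightarrow> 'a set \<Rightarrow> real" where
  "hexcess B C = (SUP b\<in>B. INF c\<in>C. dist b c)"

definition hausdorff_metric :: "'a::metric_space set \<Rightarrow> 'a set \<Rightarrow> real" where
  "hausdorff_metric B C = max (hexcess B C) (hexcess C B)"

definition Lip :: "('a::metric_space \<Rightarrow> 'b::metric_space) \<Rightarrow> real" where
  "Lip f = Inf {L. L-lipschitz_on UNIV f}"

definition setmap :: "(nat \<Rightarrow> nat) \<Rightarrow> (nat \<Rightarrow> nat \<Rightarrow> 'a \<Rightarrow> 'a) \<Rightarrow> nat \<Rightarrow> 'a set \<Rightarrow> 'a set" where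
  "setmap n f i A = (\<Union>r\<in>{1..n i}. f r i ` A)"

definition LF :: "(nat \<Rightarrow> nat) \<Rightarrow> (nat \<Rightarrow> nat \<Rightarrow> 'a::metric_space \<Rightarrow> 'a) \<Rightarrow> nat \<Rightarrow> real" where
  "LF n f i = Max ((\<lambda>r. Lip (f r i)) ` {1..n i})"

text \<open>Backward trajectory Psi k A = F_1 (F_2 (... (F_k A))); Psi 0 A = A.\<close>
fun Psi :: "(nat \<Rightarrow> nat) \<Rightarrow> (nat \<Rightarrow> nat \<Rightarrow> 'a \<Rightarrow> 'a) \<Rightarrow> nat \<Rightarrow> 'a set \<Rightarrow> 'a set" where
  "Psi n f 0 A = A"
| "Psi n f (Suc k) A = Psi n f k (setmap n f (Suc k) A)"

end

theory Submission
  imports Defs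
begin

text \<open>Each set map \<open>\<F>\<^sub>i\<close> is \<open>L\<^sub>\<F>\<^sub>i\<close>-Lipschitz for the Hausdorff metric, so \<open>\<Psi>\<^sub>k\<close> is
  Lipschitz with constant \<open>p\<^sub>k = L\<^sub>\<F>\<^sub>1 \<cdot> \<dots> \<cdot> L\<^sub>\<F>\<^sub>k\<close>. Since \<open>C\<close> is invariant, the compact sets
  \<open>\<Psi>\<^sub>k(C)\<close> decrease and hence converge to their intersection \<open>P\<close>; for any other admissible \<open>A\<close>,
  \<open>h(\<Psi>\<^sub>k(A), \<Psi>\<^sub>k(C)) \<le> p\<^sub>k h(A,C) \<longrightarrow> 0\<close>. Uniqueness holds because Hausdorff limits of
  compact sets are unique.\<close>

section \<open>The Hausdorff metric on nonempty compact sets\<close>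

lemma infdist_attained_compact:
  fixes C :: "'a::metric_space set"
  assumes "compact C" "C \<noteq> {}"
  obtains c where "c \<in> C" "infdist x C = dist x c"
  using setdist_attains_inf[OF assms, of "{x}"]
  by (metis dist_commute infdist_eq_setdist infdist_singleton)

lemma hexcess_eq_SUP_infdist: "C \<noteq> {} \<Longrightarrow> hexcess B C = (SUP b\<in>B. infdist b C)"
  by (simp add: hexcess_def infdist_notempty)

lemma hexcess_le:
  assumes "B \<noteq> {}" and "\<And>b. b \<in> B \<Longrightarrow> \<exists>c\<in>C. dist b c \<le> e"
  shows "hexcess B C \<le> e"
proof -
  have "C \<noteq> {}" using assms by blast
  then show ?thesis
    unfolding hexcess_eq_SUP_infdist[OF \<open>C \<noteq> {}\<close>]
    using assms by (metis cSUP_least infdist_le2)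
qed

lemma infdist_le_hexcess:
  assumes "bounded B" "C \<noteq> {}" "b \<in> B"
  shows "infdist b C \<le> hexcess B C"
proof -
  obtain c where "c \<in> C" using assms(2) by blast
  obtain e where e: "\<And>x. x \<in> B \<Longrightarrow> dist c x \<le> e"
    using assms(1) unfolding bounded_any_center[of B c] by blast
  have "bdd_above ((\<lambda>x. infdist x C) ` B)"
    by (rule bdd_aboveI2[where M=e]) (metis \<open>c \<in> C\<close> dist_commute e infdist_le2)
  then show ?thesis
    unfolding hexcess_eq_SUP_infdist[OF assms(2)] using assms(3) by (rule cSUP_upper2) simp
qed

lemma hausdorff_metric_commute: "hausdorff_metric A B = hausdorff_metric B A"
  by (simp add: hausdorff_metric_def max.commute)

lemma hausdorff_metric_le:
  assumes "A \<noteq> {}" "B \<noteq> {}"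
    and "\<And>a. a \<in> A \<Longrightarrow> \<exists>b\<in>B. dist a b \<le> e"
    and "\<And>b. b \<in> B \<Longrightarrow> \<exists>a\<in>A. dist b a \<le> e"
  shows "hausdorff_metric A B \<le> e"
  using hexcess_le[of A B e] hexcess_le[of B A e] assms by (simp add: hausdorff_metric_def)

lemma hausdorff_metric_attained:
  assumes "bounded A" "compact B" "B \<noteq> {}" "a \<in> A"
  obtains b where "b \<in> B" "dist a b \<le> hausdorff_metric A B"
proof -
  obtain b where "b \<in> B" "infdist a B = dist a b"
    using infdist_attained_compact[OF assms(2,3)] by blast
  moreover have "infdist a B \<le> hausdorff_metric A B"
    using infdist_le_hexcess[OF assms(1,3,4)] by (simp add: hausdorff_metric_def)
  ultimately show ?thesis using that by simp
qed

lemma hausdorff_metric_nonneg: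
  assumes "bounded A" "compact B" "A \<noteq> {}" "B \<noteq> {}"
  shows "0 \<le> hausdorff_metric A B"
proof -
  obtain a where "a \<in> A" using assms(3) by blast
  then show ?thesis
    by (metis assms(1,2,4) hausdorff_metric_attained order_trans zero_le_dist)
qed

lemma hausdorff_metric_triangle:
  assumes "compact A" "compact B" "compact D" "A \<noteq> {}" "B \<noteq> {}" "D \<noteq> {}"
  shows "hausdorff_metric A D \<le> hausdorff_metric A B + hausdorff_metric B D"
proof -
  have one_way: "\<exists>z\<in>Z. dist x z \<le> hausdorff_metric X Y + hausdorff_metric Y Z"
    if XYZ: "compact X" "compact Y" "compact Z" "Y \<noteq> {}" "Z \<noteq> {}" "x \<in> X" for X Y Z x
  proof -
    obtain y where y: "y \<in> Y" "dist x y \<le> hausdorff_metric X Y"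
      using hausdorff_metric_attained[OF compact_imp_bounded[OF XYZ(1)] XYZ(2,4,6)] .
    obtain z where z: "z \<in> Z" "dist y z \<le> hausdorff_metric Y Z"
      using hausdorff_metric_attained[OF compact_imp_bounded[OF XYZ(2)] XYZ(3,5) y(1)] .
    show ?thesis using y z dist_triangle[of x z y] by force
  qed
  show ?thesis
    using one_way[of A B D] one_way[of D B A] assms
    by (intro hausdorff_metric_le) (simp_all add: hausdorff_metric_commute add.commute)
qed

lemma hausdorff_metric_le_0_imp_eq:
  assumes "compact A" "compact B" "A \<noteq> {}" "B \<noteq> {}" "hausdorff_metric A B \<le> 0"
  shows "A = B"
proof -
  have "X \<subseteq> Y" if XY: "compact X" "compact Y" "Y \<noteq> {}" "hausdorff_metric X Y \<le> 0" for X Y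
  proof
    fix x assume "x \<in> X"
    then obtain y where "y \<in> Y" "dist x y \<le> hausdorff_metric X Y"
      using hausdorff_metric_attained[OF compact_imp_bounded[OF XY(1)] XY(2,3)] by blast
    then show "x \<in> Y" using XY(4) by (metis dist_le_zero_iff order_trans)
  qed
  then show ?thesis using assms by (metis hausdorff_metric_commute subset_antisym)
qed

lemma hausdorff_limit_unique:
  assumes K: "\<And>k. compact (K k)" "\<And>k. K k \<noteq> {}"
    and P: "compact P" "P \<noteq> {}" and Q: "compact Q" "Q \<noteq> {}"
    and KP: "(\<lambda>k. hausdorff_metric (K k) P) \<longlonglongrightarrow> 0"
    and KQ: "(\<lambda>k. hausdorff_metric (K k) Q) \<longlonglongrightarrow> 0"
  shows "P = Q"
proof (rule hausdorff_metric_le_0_imp_eq[OF P(1) Q(1) P(2) Q(2)])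
  have "hausdorff_metric P Q \<le> hausdorff_metric (K k) P + hausdorff_metric (K k) Q" for k
    using hausdorff_metric_triangle[OF P(1) K(1) Q(1) P(2) K(2) Q(2)]
    by (simp add: hausdorff_metric_commute)
  then show "hausdorff_metric P Q \<le> 0"
    using tendsto_le[OF _ tendsto_add[OF KP KQ] tendsto_const] by simp
qed

lemma hausdorff_metric_UN_image_le:
  assumes "R \<noteq> {}" and lip: "\<And>r. r \<in> R \<Longrightarrow> L-lipschitz_on UNIV (g r)"
    and "compact A" "compact B" "A \<noteq> {}" "B \<noteq> {}"
  shows "hausdorff_metric (\<Union>r\<in>R. g r ` A) (\<Union>r\<in>R. g r ` B) \<le> L * hausdorff_metric A B"
proof -
  have "0 \<le> L" using assms(1) lip lipschitz_on_nonneg by blast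
  have one_way: "\<exists>y\<in>(\<Union>r\<in>R. g r ` Y). dist x y \<le> L * hausdorff_metric X Y"
    if XY: "compact X" "compact Y" "Y \<noteq> {}" "x \<in> (\<Union>r\<in>R. g r ` X)" for X Y x
  proof -
    obtain r a where ra: "r \<in> R" "a \<in> X" "x = g r a" using XY(4) by blast
    obtain b where b: "b \<in> Y" "dist a b \<le> hausdorff_metric X Y"
      using hausdorff_metric_attained[OF compact_imp_bounded[OF XY(1)] XY(2,3) ra(2)] by blast
    have "dist (g r a) (g r b) \<le> L * dist a b" using lip[OF ra(1)] lipschitz_onD by blast
    also have "\<dots> \<le> L * hausdorff_metric X Y" using b(2) \<open>0 \<le> L\<close> by (rule mult_left_mono)
    finally show ?thesis using ra b by blast
  qed
  show ?thesis
    using one_way[of A B] one_way[of B A] assms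
    by (intro hausdorff_metric_le) (auto simp: hausdorff_metric_commute)
qed

section \<open>Decreasing sequences of compact sets\<close>

lemma decseq_compact_subset_open:
  fixes K :: "nat \<Rightarrow> 'a::t2_space set"
  assumes dec: "decseq K" and K: "\<And>k. compact (K k)" and "open U" "(\<Inter>k. K k) \<subseteq> U"
  obtains m where "K m \<subseteq> U"
proof (rule ccontr)
  assume not_sub: "\<not> thesis"
  have "(K 0 - U) \<inter> \<Inter>(range K) \<noteq> {}"
  proof (rule compact_imp_fip)
    show "compact (K 0 - U)" using K \<open>open U\<close> by (simp add: compact_diff)
    show "closed T" if "T \<in> range K" for T using that K compact_imp_closed by blast
    fix F assume "finite F" "F \<subseteq> range K"
    then obtain I where I: "finite I" "F = K ` I" by (metis finite_subset_image)
    define m where "m = Max (insert 0 I)"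
    have "i \<le> m" if "i \<in> I" for i using I(1) that by (simp add: m_def)
    then have "K m \<subseteq> \<Inter>F" "K m \<subseteq> K 0" using I decseqD[OF dec] by auto
    then show "(K 0 - U) \<inter> \<Inter>F \<noteq> {}" using not_sub that by blast
  qed
  then show False using assms(4) by blast
qed

lemma decseq_compact_Inter:
  fixes K :: "nat \<Rightarrow> 'a::t2_space set"
  assumes "decseq K" "\<And>k. compact (K k)" "\<And>k. K k \<noteq> {}"
  shows "(\<Inter>k. K k) \<noteq> {}" "compact (\<Inter>k. K k)"
proof -
  show "(\<Inter>k. K k) \<noteq> {}"
    using decseq_compact_subset_open[OF assms(1,2) open_empty] assms(3) by blast
  have "(\<Inter>k. K k) = K 0 \<inter> (\<Inter>k. K k)" by blast
  then show "compact (\<Inter>k. K k)"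
    by (metis assms(2) closed_INT compact_Int_closed compact_imp_closed)
qed

lemma hausdorff_metric_decseq_compact_tendsto_Inter:
  fixes K :: "nat \<Rightarrow> 'a::metric_space set"
  assumes dec: "decseq K" and K: "\<And>k. compact (K k)" "\<And>k. K k \<noteq> {}"
  shows "(\<lambda>k. hausdorff_metric (K k) (\<Inter>k. K k)) \<longlonglongrightarrow> 0"
proof (rule tendstoI)
  fix e :: real assume "e > 0"
  define P where "P = (\<Inter>k. K k)"
  have P: "compact P" "P \<noteq> {}" using decseq_compact_Inter[OF dec K] by (simp_all add: P_def)
  obtain m where m: "K m \<subseteq> (\<Union>y\<in>P. ball y (e/2))"
    using decseq_compact_subset_open[OF dec K(1), of "\<Union>y\<in>P. ball y (e/2)"] \<open>e > 0\<close>
    by (force simp: P_def)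
  have upper: "hausdorff_metric (K k) P \<le> e/2" if "m \<le> k" for k
  proof (rule hausdorff_metric_le[OF K(2) P(2)])
    show "\<exists>y\<in>P. dist x y \<le> e/2" if "x \<in> K k" for x
      using m decseqD[OF dec \<open>m \<le> k\<close>] that by (force simp: dist_commute)
    show "\<exists>x\<in>K k. dist y x \<le> e/2" if "y \<in> P" for y
      using that \<open>e > 0\<close> by (intro bexI[of _ y]) (auto simp: P_def)
  qed
  have "dist (hausdorff_metric (K k) P) 0 < e" if "m \<le> k" for k
    using upper[OF that] hausdorff_metric_nonneg[OF compact_imp_bounded[OF K(1)] P(1) K(2) P(2)]
      \<open>e > 0\<close> by simp
  then show "\<forall>\<^sub>F k in sequentially. dist (hausdorff_metric (K k) (\<Inter>k. K k)) 0 < e"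
    unfolding P_def eventually_sequentially by blast
qed

section \<open>Backward trajectories\<close>

lemma lipschitz_on_Lip:
  assumes "\<exists>L. L-lipschitz_on UNIV g"
  shows "(Lip g)-lipschitz_on UNIV g"
proof -
  let ?S = "{L. L-lipschitz_on UNIV g}"
  have "?S \<noteq> {}" using assms by blast
  have "0 \<le> Lip g"
    unfolding Lip_def by (rule cInf_greatest[OF \<open>?S \<noteq> {}\<close>]) (auto simp: lipschitz_on_nonneg)
  moreover have "dist (g x) (g y) \<le> Lip g * dist x y" if "x \<noteq> y" for x y
  proof -
    have "dist (g x) (g y) / dist x y \<le> Lip g"
      unfolding Lip_def using \<open>?S \<noteq> {}\<close> that
      by (intro cInf_greatest) (auto simp: lipschitz_on_def divide_le_eq)
    then show ?thesis using that by (simp add: divide_le_eq)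
  qed
  ultimately show ?thesis by (metis lipschitz_onI dist_self mult_zero_right order_refl)
qed

lemma setmap_mono: "A \<subseteq> B \<Longrightarrow> setmap n f i A \<subseteq> setmap n f i B"
  unfolding setmap_def by blast

lemma Psi_mono: "A \<subseteq> B \<Longrightarrow> Psi n f k A \<subseteq> Psi n f k B"
  by (induction k arbitrary: A B) (simp_all add: setmap_mono)

lemma decseq_Psi:
  assumes "\<And>i r. i \<ge> 1 \<Longrightarrow> r \<in> {1..n i} \<Longrightarrow> f r i ` C \<subseteq> C"
  shows "decseq (\<lambda>k. Psi n f k C)"
proof (rule decseq_SucI)
  fix k
  have "setmap n f (Suc k) C \<subseteq> C" using assms[of "Suc k"] by (auto simp: setmap_def image_subset_iff)
  then show "Psi n f (Suc k) C \<subseteq> Psi n f k C" by (simp add: Psi_mono)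
qed

locale lipschitz_ifs_sequence =
  fixes n :: "nat \<Rightarrow> nat" and f :: "nat \<Rightarrow> nat \<Rightarrow> 'a::metric_space \<Rightarrow> 'a"
  assumes n_pos: "\<And>i. i \<ge> 1 \<Longrightarrow> n i \<ge> 1"
    and lipschitz: "\<And>i r. i \<ge> 1 \<Longrightarrow> r \<in> {1..n i} \<Longrightarrow> \<exists>L. L-lipschitz_on UNIV (f r i)"
begin

lemma lipschitz_on_LF:
  assumes "i \<ge> 1" "r \<in> {1..n i}"
  shows "(LF n f i)-lipschitz_on UNIV (f r i)"
proof (rule lipschitz_on_le[OF lipschitz_on_Lip[OF lipschitz[OF assms]]])
  show "Lip (f r i) \<le> LF n f i" unfolding LF_def using assms by (intro Max_ge) auto
qed

lemma LF_nonneg: "i \<ge> 1 \<Longrightarrow> 0 \<le> LF n f i"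
  using lipschitz_on_LF[of i 1] n_pos lipschitz_on_nonneg by force

lemma setmap_compact_nonempty:
  assumes "i \<ge> 1" "compact A" "A \<noteq> {}"
  shows "compact (setmap n f i A)" "setmap n f i A \<noteq> {}"
proof -
  have "continuous_on A (f r i)" if "r \<in> {1..n i}" for r
    using lipschitz_on_continuous_on[OF lipschitz_on_LF[OF assms(1) that]] continuous_on_subset
    by blast
  then show "compact (setmap n f i A)"
    unfolding setmap_def using assms(2) by (auto intro!: compact_UN compact_continuous_image)
  show "setmap n f i A \<noteq> {}" using assms n_pos[OF assms(1)] unfolding setmap_def by auto
qed

lemma Psi_compact_nonempty:
  assumes "compact A" "A \<noteq> {}"
  shows "compact (Psi n f k A)" "Psi n f k A \<noteq> {}"
  using assms by (induction k arbitrary: A) (simp_all add: setmap_compact_nonempty)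

lemma hausdorff_metric_Psi_le:
  assumes "compact A" "compact B" "A \<noteq> {}" "B \<noteq> {}"
  shows "hausdorff_metric (Psi n f k A) (Psi n f k B) \<le> (\<Prod>i=1..k. LF n f i) * hausdorff_metric A B"
  using assms
proof (induction k arbitrary: A B)
  case 0
  then show ?case by simp
next
  case (Suc k)
  let ?F = "setmap n f (Suc k)"
  have "hausdorff_metric (Psi n f (Suc k) A) (Psi n f (Suc k) B)
      \<le> (\<Prod>i=1..k. LF n f i) * hausdorff_metric (?F A) (?F B)"
    using Suc by (simp add: setmap_compact_nonempty)
  also have "\<dots> \<le> (\<Prod>i=1..k. LF n f i) * (LF n f (Suc k) * hausdorff_metric A B)"
  proof (rule mult_left_mono)
    show "hausdorff_metric (?F A) (?F B) \<le> LF n f (Suc k) * hausdorff_metric A B"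
      unfolding setmap_def using n_pos[of "Suc k"] Suc.prems lipschitz_on_LF[of "Suc k"]
      by (intro hausdorff_metric_UN_image_le) auto
    show "0 \<le> (\<Prod>i=1..k. LF n f i)" by (intro prod_nonneg) (simp add: LF_nonneg)
  qed
  also have "\<dots> = (\<Prod>i=1..Suc k. LF n f i) * hausdorff_metric A B"
    by (simp add: prod.nat_ivl_Suc')
  finally show ?case .
qed

lemma Psi_tendsto_Inter:
  assumes prod_lim: "(\<lambda>k. \<Prod>i=1..k. LF n f i) \<longlonglongrightarrow> 0"
    and C: "compact C" "C \<noteq> {}" and C_inv: "\<And>i r. i \<ge> 1 \<Longrightarrow> r \<in> {1..n i} \<Longrightarrow> f r i ` C \<subseteq> C"
    and A: "compact A" "A \<noteq> {}"
  shows "(\<lambda>k. hausdorff_metric (Psi n f k A) (\<Inter>k. Psi n f k C)) \<longlonglongrightarrow> 0"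
proof -
  define K where "K = (\<lambda>k. Psi n f k C)"
  define P where "P = (\<Inter>k. K k)"
  have K: "compact (K k)" "K k \<noteq> {}" for k
    using Psi_compact_nonempty[OF C] by (simp_all add: K_def)
  have dec: "decseq K" using decseq_Psi[of n f C, OF C_inv] by (simp add: K_def)
  have P: "compact P" "P \<noteq> {}" using decseq_compact_Inter[OF dec K] by (simp_all add: P_def)
  have KP: "(\<lambda>k. hausdorff_metric (K k) P) \<longlonglongrightarrow> 0"
    unfolding P_def by (rule hausdorff_metric_decseq_compact_tendsto_Inter[OF dec K])
  have upper: "hausdorff_metric (Psi n f k A) P
      \<le> (\<Prod>i=1..k. LF n f i) * hausdorff_metric A C + hausdorff_metric (K k) P" for k
  proof -
    note PsiA = Psi_compact_nonempty[OF A, of k]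
    have "hausdorff_metric (Psi n f k A) P
        \<le> hausdorff_metric (Psi n f k A) (K k) + hausdorff_metric (K k) P"
      using hausdorff_metric_triangle[OF PsiA(1) K(1) P(1) PsiA(2) K(2) P(2)] .
    then show ?thesis
      using hausdorff_metric_Psi_le[OF A(1) C(1) A(2) C(2), of k] by (simp add: K_def)
  qed
  have lower: "0 \<le> hausdorff_metric (Psi n f k A) P" for k
    using Psi_compact_nonempty[OF A, of k] P
    by (intro hausdorff_metric_nonneg) (simp_all add: compact_imp_bounded)
  have bound: "(\<lambda>k. (\<Prod>i=1..k. LF n f i) * hausdorff_metric A C + hausdorff_metric (K k) P) \<longlonglongrightarrow> 0"
    using tendsto_add[OF tendsto_mult_left_zero[OF prod_lim] KP] by simp
  have "(\<lambda>k. hausdorff_metric (Psi n f k A) P) \<longlonglongrightarrow> 0"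
    by (rule tendsto_sandwich[OF always_eventually always_eventually tendsto_const bound])
      (use lower upper in blast)+
  then show ?thesis by (simp add: P_def K_def)
qed

end

theorem mainTheorem7:
  fixes n :: "nat \<Rightarrow> nat"
    and f :: "nat \<Rightarrow> nat \<Rightarrow> 'a::complete_space \<Rightarrow> 'a"
    and C :: "'a set"
  assumes n_pos: "\<And>i. i \<ge> 1 \<Longrightarrow> n i \<ge> 1"
    and lip: "\<And>i r. i \<ge> 1 \<Longrightarrow> r \<in> {1..n i} \<Longrightarrow> \<exists>L. L-lipschitz_on UNIV (f r i)"
    and prod_lim: "(\<lambda>k. \<Prod>i=1..k. LF n f i) \<longlonglongrightarrow> 0"
    and C_compact: "compact C" and C_ne: "C \<noteq> {}"
    and C_inv: "\<And>i r. i \<ge> 1 \<Longrightarrow> r \<in> {1..n i} \<Longrightarrow> f r i ` C \<subseteq> C"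
    and sum_fin: "summable (\<lambda>k. \<Prod>i=1..k. LF n f i)"
  shows "\<exists>!P. P \<subseteq> C \<and> P \<noteq> {} \<and> compact P \<and>
           (\<forall>A. A \<noteq> {} \<and> compact A \<and> A \<subseteq> C \<longrightarrow>
              (\<lambda>k. hausdorff_metric (Psi n f k A) P) \<longlonglongrightarrow> 0)"
proof -
  interpret lipschitz_ifs_sequence n f using n_pos lip by unfold_locales
  define K where "K = (\<lambda>k. Psi n f k C)"
  have dec: "decseq K" unfolding K_def by (rule decseq_Psi[of n f C, OF C_inv])
  have K: "compact (K k)" "K k \<noteq> {}" for k
    unfolding K_def using Psi_compact_nonempty[OF C_compact C_ne] by simp_all
  have KP: "(\<lambda>k. hausdorff_metric (K k) (\<Inter>k. K k)) \<longlonglongrightarrow> 0"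
    by (rule hausdorff_metric_decseq_compact_tendsto_Inter[OF dec K])
  have "(\<Inter>k. K k) \<subseteq> K 0" by blast
  then have P: "(\<Inter>k. K k) \<subseteq> C" "(\<Inter>k. K k) \<noteq> {}" "compact (\<Inter>k. K k)"
    using decseq_compact_Inter[OF dec K] by (simp_all add: K_def)
  have conv: "(\<lambda>k. hausdorff_metric (Psi n f k A) (\<Inter>k. K k)) \<longlonglongrightarrow> 0"
    if "compact A" "A \<noteq> {}" for A
    unfolding K_def by (rule Psi_tendsto_Inter[OF prod_lim C_compact C_ne C_inv that])
  show ?thesis
  proof (rule ex1I[of _ "\<Inter>k. K k"])
    fix Q assume Q: "Q \<subseteq> C \<and> Q \<noteq> {} \<and> compact Q \<and>
      (\<forall>A. A \<noteq> {} \<and> compact A \<and> A \<subseteq> C \<longrightarrow> (\<lambda>k. hausdorff_metric (Psi n f k A) Q) \<longlonglongrightarrow> 0)"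
    then have KQ: "(\<lambda>k. hausdorff_metric (K k) Q) \<longlonglongrightarrow> 0"
      unfolding K_def using C_compact C_ne by blast
    show "Q = (\<Inter>k. K k)"
      using hausdorff_limit_unique[OF K _ _ P(3,2) KQ KP] Q by blast
  qed (use P conv in blast)
qed

end
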